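(* Let $M\in\mathbb{R}^{n\times n}$ be a P$_s$-matrix, $q\in\mathbb{R}^n$ and $r\ge2$. Then for every $\gamma\ge0$ the level set $$\mathcal{L}_s(f_r,\gamma):=\{x\in S: f_r(x)\le\gamma\}$$ is bounded. Moreover, $\mathrm{sol}(M,q)\cap S\subseteq\operatorname{argmin}_{x\in S}f_r(x)$, and both of these sets are bounded.
   Context: $f_r(x)=\frac1r\big[\langle x_+^r,(Mx+q)_+^r\rangle+\|x_-\|_r^r+\|(Mx+q)_-\|_r^r\big]$ with $a_+=\max\{a,0\}$, $a_-=\min\{a,0\}$ componentwise, $x_+^r$ the componentwise $r$th power of $x_+$, $\|z\|_r^r=\sum_i|z_i|^r$. $S=\{x\in\mathbb{R}^n:\|x\|_0\le s\}$ ($\|x\|_0$ = number of nonzero entries). $\mathrm{sol}(M,q)=\{x: x\ge0,\ Mx+q\ge0,\ \langle x,Mx+q\rangle=0\}$. A P$_s$-matrix is a square matrix all of whose principal minors of order up to $s$ are positive. *)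

theory Defs
  imports "HOL-Analysis.Analysis"
begin

definition principal_minor :: "real^'n^'n \<Rightarrow> 'n set \<Rightarrow> real" where
  "principal_minor M I =
     (\<Sum>p\<in>{p. p permutes I}. of_int (sign p) * (\<Prod>i\<in>I. M $ i $ p i))"

definition Ps_matrix :: "nat \<Rightarrow> real^'n^'n \<Rightarrow> bool" where
  "Ps_matrix s M \<longleftrightarrow> (\<forall>I. I \<noteq> {} \<and> card I \<le> s \<longrightarrow> principal_minor M I > 0)"

definition sparse_set :: "nat \<Rightarrow> (real^'n) set" where
  "sparse_set s = {x. card {i. x $ i \<noteq> 0} \<le> s}"

definition f_r :: "real^'n^'n \<Rightarrow> real^'n \<Rightarrow> real \<Rightarrow> real^'n \<Rightarrow> real" where
  "f_r M q r x = (1 / r) *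
     ((\<Sum>i\<in>UNIV. (max (x $ i) 0) powr r * (max ((M *v x + q) $ i) 0) powr r)
      + (\<Sum>i\<in>UNIV. \<bar>min (x $ i) 0\<bar> powr r)
      + (\<Sum>i\<in>UNIV. \<bar>min ((M *v x + q) $ i) 0\<bar> powr r))"

definition lcp_sol :: "real^'n^'n \<Rightarrow> real^'n \<Rightarrow> (real^'n) set" where
  "lcp_sol M q = {x. (\<forall>i. 0 \<le> x $ i) \<and> (\<forall>i. 0 \<le> (M *v x + q) $ i) \<and> x \<bullet> (M *v x + q) = 0}"

definition argmin_on :: "('a \<Rightarrow> real) \<Rightarrow> 'a set \<Rightarrow> 'a set" where
  "argmin_on f S = {x \<in> S. \<forall>y\<in>S. f x \<le> f y}"

end

theory Submission
  imports Defs
begin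

text \<open>If a sublevel set of \<open>f_r\<close> on \<open>S\<close> were unbounded, normalising an unbounded sequence in it
  would give a limit direction \<open>d\<close> of norm 1. Each term of \<open>f_r\<close> stays bounded along the
  sequence while its norm grows, so \<open>d \<ge> 0\<close>, \<open>M d \<ge> 0\<close> and \<open>d\<^sub>i (M d)\<^sub>i = 0\<close>: \<open>d\<close> solves
  LCP(M, 0); and \<open>d \<in> S\<close> because \<open>S\<close> is a closed cone. Then \<open>M d\<close> vanishes on the support of
  \<open>d\<close>, which has at most \<open>s\<close> elements, so the corresponding principal submatrix, having positive
  determinant, forces \<open>d = 0\<close>. Solutions of LCP(M, q) are zeros of the nonnegative \<open>f_r\<close>, hence
  minimisers lying in the sublevel set of level 0, and every minimiser lies in the sublevel
  set of level \<open>f_r 0\<close>. The hypothesis \<open>r \<ge> 2\<close> is only needed in the weaker form \<open>r \<ge> 1\<close>.\<close>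

definition principal_padding :: "real^'n^'n \<Rightarrow> 'n set \<Rightarrow> real^'n^'n" where
  "principal_padding M I = (\<chi> i j. if i \<in> I \<and> j \<in> I then M$i$j else if i = j then 1 else 0)"

lemma det_principal_padding: "det (principal_padding M I) = principal_minor M I"
proof -
  let ?A = "principal_padding M I"
  have "det ?A = (\<Sum>p\<in>{p. p permutes I}. of_int (sign p) * (\<Prod>i\<in>UNIV. ?A $ i $ p i))"
    unfolding det_def
  proof (rule sum.mono_neutral_right)
    show "{p. p permutes I} \<subseteq> {p. p permutes UNIV}"
      using permutes_subset by blast
    show "\<forall>p\<in>{p. p permutes UNIV} - {p. p permutes I}.
            of_int (sign p) * (\<Prod>i\<in>UNIV. ?A $ i $ p i) = 0"
    proof
      fix p assume "p \<in> {p. p permutes UNIV} - {p. p permutes I}"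
      then obtain i where "i \<notin> I" "p i \<noteq> i"
        unfolding permutes_def by auto
      then have "?A $ i $ p i = 0" by (simp add: principal_padding_def)
      then show "of_int (sign p) * (\<Prod>i\<in>UNIV. ?A $ i $ p i) = 0"
        by (metis UNIV_I finite mult_zero_right prod_zero_iff)
    qed
  qed (simp add: finite_permutations)
  also have "\<dots> = principal_minor M I"
    unfolding principal_minor_def
  proof (rule sum.cong[OF refl])
    fix p assume "p \<in> {p. p permutes I}"
    then have p: "p permutes I" by simp
    have "(\<Prod>i\<in>UNIV. ?A $ i $ p i) = (\<Prod>i\<in>I. ?A $ i $ p i)"
      using p by (intro prod.mono_neutral_right)
        (auto simp: principal_padding_def permutes_def)
    also have "\<dots> = (\<Prod>i\<in>I. M $ i $ p i)"
      using permutes_in_image[OF p] by (intro prod.cong) (auto simp: principal_padding_def)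
    finally show "of_int (sign p) * (\<Prod>i\<in>UNIV. ?A $ i $ p i)
                = of_int (sign p) * (\<Prod>i\<in>I. M $ i $ p i)"
      by simp
  qed
  finally show ?thesis .
qed

lemma principal_padding_mult_vec:
  assumes "{i. d$i \<noteq> 0} \<subseteq> I"
  shows "principal_padding M I *v d = (\<chi> i. if i \<in> I then (M *v d)$i else 0)"
proof -
  have "(principal_padding M I *v d)$i = (if i \<in> I then (M *v d)$i else 0)" for i
  proof (cases "i \<in> I")
    case True
    then show ?thesis
      using assms by (auto simp: matrix_vector_mult_def principal_padding_def intro!: sum.cong)
  next
    case False
    then have "(principal_padding M I *v d)$i = d$i"
      by (simp add: matrix_vector_mult_def principal_padding_def mult_delta_left)
    then show ?thesis using False assms by auto
  qed
  then show ?thesis by (simp add: vec_eq_iff)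
qed

lemma principal_minor_support_nonzero_imp_zero:
  fixes M :: "real^'n^'n"
  assumes "principal_minor M {i. d$i \<noteq> 0} \<noteq> 0"
    and "\<And>i. d$i \<noteq> 0 \<Longrightarrow> (M *v d)$i = 0"
  shows "d = 0"
proof -
  let ?A = "principal_padding M {i. d$i \<noteq> 0}"
  have "invertible ?A"
    using assms(1) by (simp add: invertible_det_nz det_principal_padding)
  moreover have "?A *v d = 0"
    using assms(2) by (simp add: principal_padding_mult_vec vec_eq_iff)
  ultimately show "d = 0"
    by (metis invertible_def matrix_left_invertible_ker)
qed

lemma lcp_sol_iff:
  "x \<in> lcp_sol M q \<longleftrightarrow>
     (\<forall>i. 0 \<le> x$i \<and> 0 \<le> (M *v x + q)$i \<and> x$i * (M *v x + q)$i = 0)"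
  (is "_ \<longleftrightarrow> (\<forall>i. 0 \<le> x$i \<and> 0 \<le> ?w$i \<and> _)")
proof -
  have "(\<Sum>i\<in>UNIV. x$i * ?w$i) = 0 \<longleftrightarrow> (\<forall>i. x$i * ?w$i = 0)"
    if "\<forall>i. 0 \<le> x$i \<and> 0 \<le> ?w$i"
    using that by (simp add: sum_nonneg_eq_0_iff)
  then show ?thesis
    unfolding lcp_sol_def inner_vec_def by auto
qed

lemma Ps_matrix_sparse_lcp_sol_0:
  assumes "Ps_matrix s M"
  shows "lcp_sol M 0 \<inter> sparse_set s = {0}"
proof -
  have "d = 0" if d: "d \<in> lcp_sol M 0" "d \<in> sparse_set s" for d
  proof (rule principal_minor_support_nonzero_imp_zero)
    show "principal_minor M {i. d$i \<noteq> 0} \<noteq> 0"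
    proof (cases "d = 0")
      case False
      then have "{i. d$i \<noteq> 0} \<noteq> {}" by (auto simp: vec_eq_iff)
      with assms d(2) show ?thesis
        unfolding Ps_matrix_def sparse_set_def by (metis less_irrefl mem_Collect_eq)
    qed (simp add: principal_minor_def)
    show "(M *v d)$i = 0" if "d$i \<noteq> 0" for i
      using d(1) that unfolding lcp_sol_iff by auto
  qed
  moreover have "0 \<in> lcp_sol M 0 \<inter> sparse_set s"
    by (simp add: lcp_sol_iff sparse_set_def)
  ultimately show ?thesis by blast
qed

lemma sparse_set_scaleR: "x \<in> sparse_set s \<Longrightarrow> c *\<^sub>R x \<in> sparse_set s"
  unfolding sparse_set_def by (auto intro: order_trans[OF card_mono])

lemma closed_sparse_set: "closed (sparse_set s)"
  unfolding closed_sequential_limits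
proof (intro allI impI, elim conjE)
  fix x :: "nat \<Rightarrow> real^'n" and d
  assume x: "\<forall>k. x k \<in> sparse_set s" and lim: "x \<longlonglongrightarrow> d"
  have "\<forall>\<^sub>F k in sequentially. \<forall>i\<in>{i. d$i \<noteq> 0}. x k $ i \<noteq> 0"
    using lim by (intro eventually_ball_finite) (auto intro: tendsto_imp_eventually_ne tendsto_vec_nth)
  then obtain k where "{i. d$i \<noteq> 0} \<subseteq> {i. x k $ i \<noteq> 0}"
    by (auto simp: eventually_sequentially)
  then have "card {i. d$i \<noteq> 0} \<le> card {i. x k $ i \<noteq> 0}"
    by (intro card_mono) auto
  with x[rule_format, of k] show "d \<in> sparse_set s"
    unfolding sparse_set_def by simp
qed

lemma scaled_limit_nonneg:
  fixes a T :: "'a \<Rightarrow> real"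
  assumes "F \<noteq> bot" and T: "filterlim T at_top F" and "\<forall>\<^sub>F k in F. -C \<le> a k"
    and lim: "((\<lambda>k. a k / T k) \<longlongrightarrow> \<alpha>) F"
  shows "0 \<le> \<alpha>"
proof (rule tendsto_le[OF \<open>F \<noteq> bot\<close> lim])
  show "((\<lambda>k. -C / T k) \<longlongrightarrow> 0) F"
    using T by (rule tendsto_divide_0[OF tendsto_const filterlim_at_top_imp_at_infinity])
  show "\<forall>\<^sub>F k in F. -C / T k \<le> a k / T k"
    using T[unfolded filterlim_at_top_dense, rule_format, of 0] assms(3)
    by eventually_elim (intro divide_right_mono; simp)
qed

lemma scaled_limit_complementary:
  fixes a b T :: "'a \<Rightarrow> real"
  assumes "F \<noteq> bot" and T: "filterlim T at_top F"
    and "\<forall>\<^sub>F k in F. max (a k) 0 * max (b k) 0 \<le> C"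
    and "((\<lambda>k. a k / T k) \<longlongrightarrow> \<alpha>) F" "((\<lambda>k. b k / T k) \<longlongrightarrow> \<beta>) F"
  shows "max \<alpha> 0 * max \<beta> 0 = 0"
proof -
  have "max \<alpha> 0 * max \<beta> 0 \<le> 0"
  proof (rule tendsto_le[OF \<open>F \<noteq> bot\<close>])
    have "LIM k F. T k :> at_infinity"
      using T by (rule filterlim_at_top_imp_at_infinity)
    then show "((\<lambda>k. C / T k / T k) \<longlongrightarrow> 0) F"
      by (intro tendsto_divide_0[OF tendsto_divide_0[OF tendsto_const]])
    show "((\<lambda>k. max (a k / T k) 0 * max (b k / T k) 0) \<longlongrightarrow> max \<alpha> 0 * max \<beta> 0) F"
      using assms(4,5) by (intro tendsto_intros)
    show "\<forall>\<^sub>F k in F. max (a k / T k) 0 * max (b k / T k) 0 \<le> C / T k / T k"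
      using T[unfolded filterlim_at_top_dense, rule_format, of 0] assms(3)
    proof eventually_elim
      case (elim k)
      then have "max (a k / T k) 0 = max (a k) 0 / T k" "max (b k / T k) 0 = max (b k) 0 / T k"
        by (simp_all add: max_divide_distrib_right)
      then have "max (a k / T k) 0 * max (b k / T k) 0 = max (a k) 0 * max (b k) 0 / T k / T k"
        by simp
      also have "\<dots> \<le> C / T k / T k"
        using elim by (intro divide_right_mono) auto
      finally show ?case .
    qed
  qed
  then show ?thesis
    using mult_nonneg_nonneg[of "max \<alpha> 0" "max \<beta> 0"] by linarith
qed

lemma f_r_nonneg: "0 \<le> r \<Longrightarrow> 0 \<le> f_r M q r x"
  unfolding f_r_def by (intro mult_nonneg_nonneg add_nonneg_nonneg sum_nonneg) auto

lemma lcp_sol_imp_f_r_eq_0: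
  assumes "x \<in> lcp_sol M q"
  shows "f_r M q r x = 0"
proof -
  define w where "w = M *v x + q"
  have x: "0 \<le> x$i" and w: "0 \<le> w$i" and "x$i * w$i = 0" for i
    using assms unfolding lcp_sol_iff w_def by auto
  then have products: "max (x$i) 0 powr r * max (w$i) 0 powr r = 0" for i
    by (metis max.absorb1 mult_eq_0_iff powr_0)
  have negative_parts: "min (x$i) 0 = 0" "min (w$i) 0 = 0" for i
    using x w by auto
  show ?thesis
    unfolding f_r_def w_def[symmetric] by (simp add: products negative_parts)
qed

lemma powr_le_imp_le_max_1:
  fixes a K r :: real
  assumes "0 \<le> a" "a powr r \<le> K" "1 \<le> r"
  shows "a \<le> max 1 K"
proof (cases "a \<le> 1")
  case False
  then have "a powr 1 \<le> a powr r" using assms by (intro powr_mono) auto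
  with assms False show ?thesis by simp
qed simp

lemma f_r_le_imp_component_bounds:
  fixes M :: "real^'n^'n"
  assumes "1 \<le> r" "f_r M q r x \<le> \<gamma>"
  defines "C \<equiv> max 1 (r * \<gamma>)" and "w \<equiv> M *v x + q"
  shows "-C \<le> x$i" "-C \<le> w$i" "max (x$i) 0 * max (w$i) 0 \<le> C"
proof -
  let ?S1 = "\<Sum>i\<in>UNIV. max (x$i) 0 powr r * max (w$i) 0 powr r"
  let ?S2 = "\<Sum>i\<in>UNIV. \<bar>min (x$i) 0\<bar> powr r"
  let ?S3 = "\<Sum>i\<in>UNIV. \<bar>min (w$i) 0\<bar> powr r"
  have "?S1 + ?S2 + ?S3 \<le> r * \<gamma>"
    using assms(1,2) unfolding f_r_def w_def by (simp add: field_simps)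
  moreover have "?S1 \<ge> 0" "?S2 \<ge> 0" "?S3 \<ge> 0"
    by (auto intro!: sum_nonneg)
  moreover have "max (x$i) 0 powr r * max (w$i) 0 powr r \<le> ?S1"
    "\<bar>min (x$i) 0\<bar> powr r \<le> ?S2" "\<bar>min (w$i) 0\<bar> powr r \<le> ?S3"
    by (rule member_le_sum; simp)+
  ultimately have "(max (x$i) 0 * max (w$i) 0) powr r \<le> r * \<gamma>"
    "\<bar>min (x$i) 0\<bar> powr r \<le> r * \<gamma>" "\<bar>min (w$i) 0\<bar> powr r \<le> r * \<gamma>"
    by (simp_all add: powr_mult)
  then have "max (x$i) 0 * max (w$i) 0 \<le> C" "\<bar>min (x$i) 0\<bar> \<le> C" "\<bar>min (w$i) 0\<bar> \<le> C"
    unfolding C_def using assms(1) by (auto intro: powr_le_imp_le_max_1)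
  then show "-C \<le> x$i" "-C \<le> w$i" "max (x$i) 0 * max (w$i) 0 \<le> C"
    by linarith+
qed

lemma sublevel_recession_direction:
  fixes M :: "real^'n^'n" and y :: "'a \<Rightarrow> real^'n"
  assumes "F \<noteq> bot" "1 \<le> r"
    and sublevel: "\<forall>\<^sub>F k in F. y k \<in> sparse_set s \<and> f_r M q r (y k) \<le> \<gamma>"
    and T: "filterlim T at_top F" and lim: "((\<lambda>k. y k /\<^sub>R T k) \<longlongrightarrow> d) F"
  shows "d \<in> lcp_sol M 0 \<inter> sparse_set s"
proof
  have "((\<lambda>k. q /\<^sub>R T k) \<longlongrightarrow> 0) F"
    using tendsto_scaleR[OF tendsto_inverse_0_at_top[OF T] tendsto_const, of q] by simp
  with lim have "((\<lambda>k. M *v (y k /\<^sub>R T k) + q /\<^sub>R T k) \<longlongrightarrow> M *v d + 0) F"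
    by (intro tendsto_add isCont_tendsto_compose[OF matrix_vector_mult_linear_continuous_at])
  then have lim_w: "((\<lambda>k. (M *v y k + q) /\<^sub>R T k) \<longlongrightarrow> M *v d) F"
    by (simp add: matrix_vector_mult_scaleR scaleR_add_right)
  have "0 \<le> d$i \<and> 0 \<le> (M *v d)$i \<and> d$i * (M *v d)$i = 0" for i
  proof -
    let ?a = "\<lambda>k. y k $ i" and ?b = "\<lambda>k. (M *v y k + q) $ i"
    define C where "C = max 1 (r * \<gamma>)"
    have bounds: "\<forall>\<^sub>F k in F. -C \<le> ?a k \<and> -C \<le> ?b k \<and> max (?a k) 0 * max (?b k) 0 \<le> C"
      using sublevel
    proof eventually_elim
      case (elim k)
      then show ?case
        using f_r_le_imp_component_bounds[OF \<open>1 \<le> r\<close>, of M q "y k" \<gamma> i]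
        unfolding C_def by blast
    qed
    have lim_a: "((\<lambda>k. ?a k / T k) \<longlongrightarrow> d$i) F"
      and lim_b: "((\<lambda>k. ?b k / T k) \<longlongrightarrow> (M *v d)$i) F"
      using tendsto_vec_nth[OF lim, of i] tendsto_vec_nth[OF lim_w, of i]
      by (simp_all add: divide_inverse_commute)
    note bounds' = eventually_mono[OF bounds]
    have "0 \<le> d$i"
      by (rule scaled_limit_nonneg[where C = C, OF assms(1) T bounds' lim_a]) simp
    moreover have "0 \<le> (M *v d)$i"
      by (rule scaled_limit_nonneg[where C = C, OF assms(1) T bounds' lim_b]) simp
    moreover have "max (d$i) 0 * max ((M *v d)$i) 0 = 0"
      by (rule scaled_limit_complementary[where C = C, OF assms(1) T bounds' lim_a lim_b]) simp
    ultimately show ?thesis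
      by simp
  qed
  then show "d \<in> lcp_sol M 0"
    by (simp add: lcp_sol_iff)
  have "\<forall>\<^sub>F k in F. y k /\<^sub>R T k \<in> sparse_set s"
    using sublevel by eventually_elim (simp add: sparse_set_scaleR)
  then show "d \<in> sparse_set s"
    by (rule Lim_in_closed_set[OF closed_sparse_set _ assms(1) lim])
qed

lemma bounded_sparse_sublevel_set:
  fixes M :: "real^'n^'n"
  assumes "Ps_matrix s M" "1 \<le> r"
  shows "bounded {x \<in> sparse_set s. f_r M q r x \<le> \<gamma>}" (is "bounded ?L")
proof (rule ccontr)
  assume "\<not> bounded ?L"
  then have "\<forall>k::nat. \<exists>x\<in>?L. real k < norm x"
    unfolding bounded_iff by (meson not_le)
  then obtain x where x: "\<And>k. x k \<in> ?L" and x_large: "\<And>k. real k < norm (x k)"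
    by metis
  have "0 < norm (x k)" for k
    using x_large[of k] of_nat_0_le_iff[of k] by linarith
  then have unit: "\<forall>k. x k /\<^sub>R norm (x k) \<in> sphere 0 1"
    by simp
  obtain d \<sigma> where "d \<in> sphere 0 1" "strict_mono \<sigma>"
    and "((\<lambda>k. x k /\<^sub>R norm (x k)) \<circ> \<sigma>) \<longlonglongrightarrow> d"
    using seq_compactE[OF compact_imp_seq_compact[OF compact_sphere] unit] by blast
  then have lim: "((\<lambda>k. x (\<sigma> k) /\<^sub>R norm (x (\<sigma> k))) \<longlongrightarrow> d) sequentially"
    by (simp add: comp_def)
  have "filterlim (\<lambda>k. norm (x (\<sigma> k))) at_top sequentially"
    using x_large seq_suble[OF \<open>strict_mono \<sigma>\<close>]
    by (intro filterlim_at_top_mono[OF filterlim_real_sequentially] always_eventually allI)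
      (metis less_imp_le of_nat_le_iff order_trans)
  with x lim have "d \<in> lcp_sol M 0 \<inter> sparse_set s"
    by (intro sublevel_recession_direction[where q = q and \<gamma> = \<gamma>, OF _ \<open>1 \<le> r\<close>]) simp_all
  with Ps_matrix_sparse_lcp_sol_0[OF assms(1)] \<open>d \<in> sphere 0 1\<close> show False
    by auto
qed

theorem theorem4p4:
  fixes M :: "real^'n^'n" and q :: "real^'n" and r :: real and s :: nat
  assumes "Ps_matrix s M" and "r \<ge> 2"
  shows "(\<forall>\<gamma>\<ge>0. bounded {x \<in> sparse_set s. f_r M q r x \<le> \<gamma>})
         \<and> lcp_sol M q \<inter> sparse_set s \<subseteq> argmin_on (f_r M q r) (sparse_set s)
         \<and> bounded (lcp_sol M q \<inter> sparse_set s)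
         \<and> bounded (argmin_on (f_r M q r) (sparse_set s))"
proof -
  have r: "1 \<le> r" "0 \<le> r"
    using assms(2) by simp_all
  have sublevel: "bounded {x \<in> sparse_set s. f_r M q r x \<le> \<gamma>}" for \<gamma>
    by (rule bounded_sparse_sublevel_set[OF assms(1) r(1)])
  have "lcp_sol M q \<inter> sparse_set s \<subseteq> argmin_on (f_r M q r) (sparse_set s)"
    using r(2) by (auto simp: argmin_on_def lcp_sol_imp_f_r_eq_0 f_r_nonneg)
  moreover have "lcp_sol M q \<inter> sparse_set s \<subseteq> {x \<in> sparse_set s. f_r M q r x \<le> 0}"
    by (auto simp: lcp_sol_imp_f_r_eq_0)
  moreover have "argmin_on (f_r M q r) (sparse_set s)
      \<subseteq> {x \<in> sparse_set s. f_r M q r x \<le> f_r M q r 0}"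
    by (auto simp: argmin_on_def sparse_set_def)
  ultimately show ?thesis
    using sublevel bounded_subset by blast
qed

end
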